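(* Let $\Omega$ be a transitive state space. There exists a basis $\{v_l\}_{l=1}^{N+1}$ of $V$, orthonormal with respect to $\langle\cdot,\cdot\rangle_{GL(\Omega)}$, such that $v_{N+1}=\omega_M$ and, for $x\in V$, $$x\in\mathrm{aff}(\Omega)\iff x=\sum_{l=1}^Na_lv_l+\omega_M\ \text{ for some }a_1,\dots,a_N\in\mathbb R.$$
   Context: $V=\mathbb R^{N+1}$ with Euclidean inner product $(\cdot,\cdot)_E$. A state space $\Omega\subset V$ is a compact convex set with $\mathrm{span}(\Omega)=V$ and $0\notin\mathrm{aff}(\Omega)$ (so $\dim\mathrm{aff}(\Omega)=N$). $GL(\Omega)$ is the compact group of linear bijections $T:V\to V$ with $T(\Omega)=\Omega$, $\mu$ its normalized two-sided Haar measure, and $\langle x,y\rangle_{GL(\Omega)}=\int_{GL(\Omega)}(Tx,Ty)_E\,d\mu(T)$. $\Omega$ is transitive if $GL(\Omega)$ acts transitively on its extreme points; then there is a unique state $\omega_M$ (maximally mixed state) with $T\omega_M=\omega_M$ for all $T\in GL(\Omega)$, and by the standing convention for transitive state spaces $\Omega$ is rescaled so that $(\omega_M,\omega_M)_E=1$. *)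

theory Defs
  imports "HOL-Probability.Probability"
begin

definition state_space :: "(real^'n) set \<Rightarrow> bool" where
  "state_space \<Omega> \<longleftrightarrow> compact \<Omega> \<and> convex \<Omega> \<and> span \<Omega> = UNIV \<and> 0 \<notin> affine hull \<Omega>"

definition GL_of :: "(real^'n) set \<Rightarrow> (real^'n^'n) set" where
  "GL_of \<Omega> = {T. invertible T \<and> (\<lambda>x. T *v x) ` \<Omega> = \<Omega>}"

definition haar_GL :: "(real^'n) set \<Rightarrow> (real^'n^'n) measure \<Rightarrow> bool" where
  "haar_GL \<Omega> \<mu> \<longleftrightarrow> prob_space \<mu> \<and> sets \<mu> = sets borel \<and> measure \<mu> (GL_of \<Omega>) = 1 \<and>
     (\<forall>T\<in>GL_of \<Omega>. distr \<mu> borel (\<lambda>A. T ** A) = \<mu> \<and> distr \<mu> borel (\<lambda>A. A ** T) = \<mu>)"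

definition GL_inner :: "(real^'n^'n) measure \<Rightarrow> real^'n \<Rightarrow> real^'n \<Rightarrow> real" where
  "GL_inner \<mu> x y = (\<integral>T. (T *v x) \<bullet> (T *v y) \<partial>\<mu>)"

definition transitive_state_space :: "(real^'n) set \<Rightarrow> bool" where
  "transitive_state_space \<Omega> \<longleftrightarrow> state_space \<Omega> \<and>
     (\<forall>x y. x extreme_point_of \<Omega> \<longrightarrow> y extreme_point_of \<Omega> \<longrightarrow>
        (\<exists>T\<in>GL_of \<Omega>. T *v x = y))"

definition omegaM :: "(real^'n) set \<Rightarrow> real^'n" where
  "omegaM \<Omega> = (THE w. w \<in> \<Omega> \<and> (\<forall>T\<in>GL_of \<Omega>. T *v w = w))"

end

theory Submission
  imports Defs
begin

(* Averaging over the Haar measure gives a linear map P x = \<integral> T x d\<mu>(T) with T (P x) = P x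
   and P (T x) = P x for every T in GL(\<Omega>). By right invariance and transitivity P is
   constant on the extreme points of \<Omega>, hence, by Krein-Milman, on \<Omega>; this constant lies in
   \<Omega> and is fixed by GL(\<Omega>), so it is \<omega>_M. As \<Omega> spans V, P x = \<lambda>(x) \<omega>_M for a linear
   functional \<lambda>, and aff(\<Omega>) = {\<lambda> = 1}. Since \<omega>_M is fixed by GL(\<Omega>),
   <\<omega>_M, x>_GL = \<omega>_M \<bullet> P x = \<lambda>(x), so aff(\<Omega>) is the affine hyperplane <\<omega>_M, x>_GL = 1.
   Gram-Schmidt for <_, _>_GL applied to a basis ending with the unit vector \<omega>_M yields an
   orthonormal basis v_1, ..., v_(N+1) = \<omega>_M, in which that hyperplane is {\<Sum> a_l v_l + \<omega>_M}. *)

section \<open>Gram-Schmidt for an abstract inner product\<close>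

locale inner_form =
  fixes B :: "'a::real_vector \<Rightarrow> 'a \<Rightarrow> real"
  assumes sym: "B x y = B y x"
    and linear_right: "linear (B x)"
    and pos_def: "x \<noteq> 0 \<Longrightarrow> 0 < B x x"
begin

lemma right_add: "B x (y + z) = B x y + B x z"
  and right_diff: "B x (y - z) = B x y - B x z"
  and right_scaleR: "B x (c *\<^sub>R y) = c * B x y"
  and right_sum: "B x (\<Sum>i\<in>I. f i) = (\<Sum>i\<in>I. B x (f i))"
  and right_zero: "B x 0 = 0"
  using linear_right[of x]
  by (simp_all add: linear_add linear_diff linear_scale linear_sum linear_0)

lemma left_scaleR: "B (c *\<^sub>R x) y = c * B x y"
  by (simp add: sym[of _ y] right_scaleR)

lemma eq_zero_iff: "B x x = 0 \<longleftrightarrow> x = 0"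
  by (metis less_irrefl pos_def right_zero)

lemma unit_scaleR_inverse_sqrt:
  assumes "y \<noteq> 0"
  shows "B (y /\<^sub>R sqrt (B y y)) (y /\<^sub>R sqrt (B y y)) = 1"
  using pos_def[OF assms] by (simp add: right_scaleR left_scaleR field_simps)

definition orthonormal_on :: "'i set \<Rightarrow> ('i \<Rightarrow> 'a) \<Rightarrow> bool" where
  "orthonormal_on I v \<longleftrightarrow> (\<forall>i\<in>I. \<forall>j\<in>I. B (v i) (v j) = (if i = j then 1 else 0))"

lemma orthonormal_on_inj_on: "orthonormal_on I v \<Longrightarrow> inj_on v I"
  unfolding orthonormal_on_def by (rule inj_onI) (metis zero_neq_one)

definition proj :: "'i set \<Rightarrow> ('i \<Rightarrow> 'a) \<Rightarrow> 'a \<Rightarrow> 'a" where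
  "proj I v x = (\<Sum>i\<in>I. B (v i) x *\<^sub>R v i)"

lemma proj_in_span: "proj I v x \<in> span (v ` I)"
  unfolding proj_def by (intro span_sum span_scale span_base) auto

lemma orthonormal_on_B_proj:
  assumes "finite I" "orthonormal_on I v" "j \<in> I"
  shows "B (v j) (proj I v x) = B (v j) x"
proof -
  have "B (v j) (proj I v x) = (\<Sum>i\<in>I. B (v i) x * B (v j) (v i))"
    by (simp add: proj_def right_sum right_scaleR)
  also have "\<dots> = (\<Sum>i\<in>I. if i = j then B (v j) x else 0)"
    using assms(2,3) by (intro sum.cong) (auto simp: orthonormal_on_def)
  finally show ?thesis using assms(1,3) by simp
qed

lemma orthonormal_on_proj_eq:
  assumes "finite I" "orthonormal_on I v" "x \<in> span (v ` I)"
  shows "proj I v x = x"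
proof -
  let ?r = "x - proj I v x"
  have orth: "B (v j) ?r = 0" if "j \<in> I" for j
    using orthonormal_on_B_proj[OF assms(1,2) that] by (simp add: right_diff)
  have "?r \<in> span (v ` I)"
    using assms(3) proj_in_span by (rule span_diff)
  then have "B ?r ?r = 0"
    by (rule linear_eq_0_on_span[OF linear_right, rotated]) (auto simp: sym[of ?r] orth)
  then show ?thesis by (simp add: eq_zero_iff)
qed

lemma orthonormal_on_independent:
  assumes "finite I" "orthonormal_on I v"
  shows "independent (v ` I)"
proof
  assume "dependent (v ` I)"
  then obtain u k where k: "k \<in> I" "u (v k) \<noteq> 0" and "(\<Sum>w\<in>v ` I. u w *\<^sub>R w) = 0"
    using dependent_finite[OF finite_imageI[OF assms(1)]] by blast
  then have "(\<Sum>i\<in>I. u (v i) *\<^sub>R v i) = 0"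
    by (simp add: sum.reindex[OF orthonormal_on_inj_on[OF assms(2)]])
  then have "0 = B (v k) (\<Sum>i\<in>I. u (v i) *\<^sub>R v i)"
    by (simp add: right_zero)
  also have "\<dots> = (\<Sum>i\<in>I. if i = k then u (v k) else 0)"
    using assms(2) k(1) by (auto simp: right_sum right_scaleR orthonormal_on_def intro: sum.cong)
  finally show False using assms(1) k by simp
qed

lemma orthonormal_on_insert:
  assumes "orthonormal_on S (\<lambda>y. y)" "B z z = 1" "\<forall>y\<in>S. B y z = 0"
  shows "orthonormal_on (insert z S) (\<lambda>y. y)" and "z \<notin> S"
proof -
  have "B z y = 0" if "y \<in> S" for y
    using assms(3) that sym[of z y] by simp
  then show "orthonormal_on (insert z S) (\<lambda>y. y)"
    using assms by (auto simp: orthonormal_on_def)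
  show "z \<notin> S"
    using assms(2,3) by auto
qed

(* The head is orthogonalised against the orthonormalised tail, so the last vector of the
   input is merely normalised. *)
fun gram_schmidt :: "'a list \<Rightarrow> 'a list" where
  "gram_schmidt [] = []"
| "gram_schmidt (x # xs) =
     (let ys = gram_schmidt xs; y = x - proj (set ys) (\<lambda>y. y) x in (y /\<^sub>R sqrt (B y y)) # ys)"

lemma length_gram_schmidt [simp]: "length (gram_schmidt xs) = length xs"
  by (induction xs) (simp_all add: Let_def)

lemma gram_schmidt_snoc_nth_length: "gram_schmidt (xs @ [m]) ! length xs = m /\<^sub>R sqrt (B m m)"
  by (induction xs) (simp_all add: Let_def proj_def)

lemma gram_schmidt_subset_span: "set (gram_schmidt xs) \<subseteq> span (set xs)"
proof (induction xs)
  case Nil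
  then show ?case by simp
next
  case (Cons x xs)
  let ?ys = "gram_schmidt xs"
  have ys: "set ?ys \<subseteq> span (set (x # xs))"
    using Cons.IH span_mono[of "set xs" "set (x # xs)"] by auto
  have "proj (set ?ys) (\<lambda>y. y) x \<in> span (set (x # xs))"
    using proj_in_span[of "set ?ys" "\<lambda>y. y" x] span_mono[OF ys] by (auto simp: span_span)
  then have "x - proj (set ?ys) (\<lambda>y. y) x \<in> span (set (x # xs))"
    by (intro span_diff) (auto intro: span_base)
  then show ?case using ys by (auto simp: Let_def intro: span_scale)
qed

lemma orthonormal_gram_schmidt:
  "independent (set xs) \<Longrightarrow> distinct xs \<Longrightarrow>
     distinct (gram_schmidt xs) \<and> orthonormal_on (set (gram_schmidt xs)) (\<lambda>y. y)"
proof (induction xs)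
  case Nil
  then show ?case by (simp add: orthonormal_on_def)
next
  case (Cons x xs)
  let ?ys = "gram_schmidt xs"
  define y where "y = x - proj (set ?ys) (\<lambda>y. y) x"
  define z where "z = y /\<^sub>R sqrt (B y y)"
  have "independent (set xs)" "distinct xs"
    using Cons.prems dependent_mono[of "set xs" "set (x # xs)"] by auto
  then have IH: "distinct ?ys" "orthonormal_on (set ?ys) (\<lambda>y. y)"
    using Cons.IH by blast+
  have "y \<noteq> 0"
  proof
    assume "y = 0"
    then have "x \<in> span (set ?ys)"
      using proj_in_span[of "set ?ys" "\<lambda>y. y" x] by (simp add: y_def)
    then have "x \<in> span (set xs)"
      using span_mono[OF gram_schmidt_subset_span] by (auto simp: span_span)
    then show False
      using Cons.prems by (simp add: independent_insert)
  qed
  have "B w y = 0" if "w \<in> set ?ys" for w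
    using orthonormal_on_B_proj[OF _ IH(2) that] by (simp add: y_def right_diff)
  then have "\<forall>w\<in>set ?ys. B w z = 0"
    by (simp add: z_def right_scaleR)
  moreover have "B z z = 1"
    unfolding z_def by (rule unit_scaleR_inverse_sqrt[OF \<open>y \<noteq> 0\<close>])
  ultimately show ?case
    using orthonormal_on_insert[OF IH(2)] IH(1) by (simp add: Let_def y_def z_def)
qed

lemma orthonormal_on_last_eq_1_iff:
  fixes v :: "nat \<Rightarrow> 'a"
  assumes "orthonormal_on {1..n} v" "span (v ` {1..n}) = UNIV" "0 < n"
  shows "B (v n) x = 1 \<longleftrightarrow> (\<exists>a. x = (\<Sum>l = 1..n - 1. a l *\<^sub>R v l) + v n)"
proof -
  obtain m where n: "n = Suc m"
    using assms(3) by (cases n) auto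
  have "B (v (Suc m)) x = 1 \<longleftrightarrow> (\<exists>a. x = (\<Sum>l = 1..m. a l *\<^sub>R v l) + v (Suc m))"
  proof
    assume x: "B (v (Suc m)) x = 1"
    have "x = proj {1..Suc m} v x"
      using orthonormal_on_proj_eq[OF _ assms(1)] assms(2) by (simp add: n)
    also have "\<dots> = (\<Sum>l = 1..m. B (v l) x *\<^sub>R v l) + v (Suc m)"
      using x by (simp add: proj_def)
    finally show "\<exists>a. x = (\<Sum>l = 1..m. a l *\<^sub>R v l) + v (Suc m)"
      by (rule exI[of _ "\<lambda>l. B (v l) x"])
  next
    assume "\<exists>a. x = (\<Sum>l = 1..m. a l *\<^sub>R v l) + v (Suc m)"
    then obtain a where x: "x = (\<Sum>l = 1..m. a l *\<^sub>R v l) + v (Suc m)" ..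
    have "B (v (Suc m)) (v l) = (if l = Suc m then 1 else 0)" if "l \<in> {1..Suc m}" for l
      using assms(1) that by (simp add: orthonormal_on_def n)
    then show "B (v (Suc m)) x = 1"
      by (simp add: x right_add right_sum right_scaleR)
  qed
  then show ?thesis
    by (simp add: n)
qed

end

locale finite_dim_inner_form = inner_form B for B :: "'a::euclidean_space \<Rightarrow> 'a \<Rightarrow> real"
begin

lemma orthonormal_basis_ending_with:
  assumes "B m m = 1"
  obtains v :: "nat \<Rightarrow> 'a"
  where "orthonormal_on {1..DIM('a)} v" "v DIM('a) = m" "span (v ` {1..DIM('a)}) = UNIV"
proof -
  have "m \<noteq> 0"
    using assms by (metis right_zero zero_neq_one)
  define E where "E = extend_basis {m}"
  have "m \<in> E" "independent E" "span E = UNIV"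
    using extend_basis_superset[of "{m}"] independent_extend_basis[of "{m}"]
      span_extend_basis[of "{m}"] \<open>m \<noteq> 0\<close>
    by (auto simp: E_def)
  then have "finite E" "card E = DIM('a)"
    using independent_bound dim_eq_card[of E UNIV] by auto
  then obtain xs where xs: "set xs = E - {m}" "distinct xs"
    using finite_distinct_list[of "E - {m}"] by auto
  define L where "L = gram_schmidt (xs @ [m])"
  have L: "distinct L" "orthonormal_on (set L) (\<lambda>y. y)"
    using orthonormal_gram_schmidt[of "xs @ [m]"] xs \<open>m \<in> E\<close> \<open>independent E\<close>
    by (auto simp: L_def insert_absorb)
  have "length L = DIM('a)"
    using distinct_card[of "xs @ [m]"] xs \<open>m \<in> E\<close> \<open>card E = DIM('a)\<close>
    by (simp add: L_def insert_absorb)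
  define v where "v l = L ! (l - 1)" for l
  have on: "orthonormal_on {1..DIM('a)} v"
    using L \<open>length L = DIM('a)\<close>
    by (auto simp: orthonormal_on_def v_def nth_eq_iff_index_eq)
  have "DIM('a) = Suc (length xs)"
    using \<open>length L = DIM('a)\<close> by (simp add: L_def)
  then have "v DIM('a) = m"
    using gram_schmidt_snoc_nth_length[of xs m] assms by (simp add: v_def L_def)
  moreover have "span (v ` {1..DIM('a)}) = UNIV"
    using card_ge_dim_independent[of "v ` {1..DIM('a)}" UNIV] orthonormal_on_independent[OF _ on]
      card_image[OF orthonormal_on_inj_on[OF on]]
    by auto
  ultimately show thesis
    using on that by blast
qed

end

section \<open>Averaging over the Haar measure of GL(\<Omega>)\<close>

lemma affine_linear_level_set: "linear f \<Longrightarrow> affine {x. f x = c}"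
  unfolding affine_def by (auto simp: linear_add linear_scale scaleR_left_distrib[symmetric])

lemma borel_measurable_linear:
  fixes f :: "'a::euclidean_space \<Rightarrow> 'b::euclidean_space"
  shows "linear f \<Longrightarrow> f \<in> borel_measurable borel"
  by (intro borel_measurable_continuous_onI linear_continuous_on linear_conv_bounded_linear[THEN iffD1])

lemma linear_matrix_vector_mult_left: "linear (\<lambda>A::real^'n^'m. A *v x)"
  by (rule linearI)
    (simp_all add: algebra_simps vec_eq_iff matrix_vector_mult_def sum_distrib_left sum.distrib)

lemma linear_matrix_mult_left: "linear (\<lambda>A::real^'n^'m. A ** S)"
  by (rule linearI)
    (simp_all add: vec_eq_iff matrix_matrix_mult_def sum.distrib sum_distrib_left algebra_simps)

lemma linear_matrix_mult_right: "linear (\<lambda>A::real^'n^'m. S ** A)"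
  by (rule linearI)
    (simp_all add: vec_eq_iff matrix_matrix_mult_def sum.distrib sum_distrib_left algebra_simps)

lemma (in prob_space) integral_mem_closed_convex:
  fixes f :: "'a \<Rightarrow> 'b::euclidean_space"
  assumes "closed C" "convex C" "integrable M f" "AE x in M. f x \<in> C"
  shows "integral\<^sup>L M f \<in> C"
proof (rule ccontr)
  assume "integral\<^sup>L M f \<notin> C"
  then obtain a b where ab: "a \<bullet> integral\<^sup>L M f < b" "\<forall>x\<in>C. b < a \<bullet> x"
    using separating_hyperplane_closed_point[OF assms(2,1)] by blast
  have "AE x in M. b \<le> a \<bullet> f x"
    using assms(4) by eventually_elim (use ab(2) in \<open>auto intro: less_imp_le\<close>)
  then have "(\<integral>x. b \<partial>M) \<le> (\<integral>x. a \<bullet> f x \<partial>M)"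
    using assms(3) by (intro integral_mono_AE) auto
  then show False
    using ab(1) assms(3) by (simp add: prob_space)
qed

lemma GL_of_maps_into:
  assumes "T \<in> GL_of \<Omega>" "x \<in> \<Omega>"
  shows "T *v x \<in> \<Omega>"
proof -
  have "T *v x \<in> (\<lambda>x. T *v x) ` \<Omega>"
    using assms(2) by (rule imageI)
  then show ?thesis
    using assms(1) by (simp add: GL_of_def)
qed

lemma GL_orbit_bounded:
  assumes "bounded \<Omega>" "span \<Omega> = UNIV"
  obtains K where "\<And>T. T \<in> GL_of \<Omega> \<Longrightarrow> norm (T *v x) \<le> K"
proof -
  obtain R where R: "\<And>y. y \<in> \<Omega> \<Longrightarrow> norm y \<le> R"
    using assms(1) unfolding bounded_iff by blast
  have "x \<in> span \<Omega>"
    using assms(2) by simp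
  then obtain S u where S: "finite S" "S \<subseteq> \<Omega>" "x = (\<Sum>y\<in>S. u y *\<^sub>R y)"
    unfolding span_explicit by blast
  have "norm (T *v x) \<le> (\<Sum>y\<in>S. \<bar>u y\<bar> * R)" if T: "T \<in> GL_of \<Omega>" for T
  proof -
    have "T *v x = (\<Sum>y\<in>S. u y *\<^sub>R (T *v y))"
      by (simp add: S(3) linear_sum[OF matrix_vector_mul_linear] linear_scale[OF matrix_vector_mul_linear])
    also have "norm \<dots> \<le> (\<Sum>y\<in>S. norm (u y *\<^sub>R (T *v y)))"
      by (rule norm_sum)
    also have "\<dots> \<le> (\<Sum>y\<in>S. \<bar>u y\<bar> * R)"
      using S(2) by (intro sum_mono) (auto intro!: mult_left_mono R GL_of_maps_into[OF T])
    finally show ?thesis .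
  qed
  then show thesis by (rule that)
qed

locale GL_haar =
  fixes \<Omega> :: "(real^'n) set" and \<mu> :: "(real^'n^'n) measure"
  assumes state_space: "state_space \<Omega>" and haar: "haar_GL \<Omega> \<mu>"
begin

sublocale prob_space \<mu>
  using haar by (simp add: haar_GL_def)

lemma measurable_haar_eq: "measurable \<mu> N = measurable borel N"
  using haar by (intro measurable_cong_sets) (simp_all add: haar_GL_def)

lemma AE_GL_I: "(\<And>T. T \<in> GL_of \<Omega> \<Longrightarrow> P T) \<Longrightarrow> AE T in \<mu>. P T"
  using haar AE_prob_1[of "GL_of \<Omega>"] by (auto simp: haar_GL_def elim: eventually_mono)

lemma borel_measurable_orbit: "(\<lambda>T. T *v x) \<in> borel_measurable \<mu>"
  by (simp add: measurable_haar_eq borel_measurable_linear linear_matrix_vector_mult_left)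

lemma bounded_orbit:
  obtains K where "\<And>T. T \<in> GL_of \<Omega> \<Longrightarrow> norm (T *v x) \<le> K"
proof -
  have "bounded \<Omega>" "span \<Omega> = UNIV"
    using state_space by (auto simp: state_space_def compact_imp_bounded)
  then show thesis
    using GL_orbit_bounded that by metis
qed

lemma integrable_orbit: "integrable \<mu> (\<lambda>T. T *v x)"
proof -
  obtain K where "\<And>T. T \<in> GL_of \<Omega> \<Longrightarrow> norm (T *v x) \<le> K"
    using bounded_orbit by blast
  then have "AE T in \<mu>. norm (T *v x) \<le> K"
    by (rule AE_GL_I)
  then show ?thesis
    by (rule integrable_const_bound[OF _ borel_measurable_orbit])
qed

lemma integrable_orbit_inner: "integrable \<mu> (\<lambda>T. (T *v x) \<bullet> (T *v y))"
proof -
  obtain K K' where K: "\<And>T. T \<in> GL_of \<Omega> \<Longrightarrow> norm (T *v x) \<le> K"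
    and K': "\<And>T. T \<in> GL_of \<Omega> \<Longrightarrow> norm (T *v y) \<le> K'"
    using bounded_orbit by metis
  have "norm ((T *v x) \<bullet> (T *v y)) \<le> K * K'" if "T \<in> GL_of \<Omega>" for T
  proof -
    have "norm (T *v x) * norm (T *v y) \<le> K * K'"
      using K[OF that] K'[OF that] by (intro mult_mono) (auto intro: order_trans[OF norm_ge_zero])
    then show ?thesis
      using Cauchy_Schwarz_ineq2[of "T *v x" "T *v y"] by simp
  qed
  then have "AE T in \<mu>. norm ((T *v x) \<bullet> (T *v y)) \<le> K * K'"
    by (rule AE_GL_I)
  then show ?thesis
    by (rule integrable_const_bound) (intro borel_measurable_inner borel_measurable_orbit)
qed

definition average :: "real^'n \<Rightarrow> real^'n" where
  "average x = (\<integral>T. T *v x \<partial>\<mu>)"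

lemma linear_average: "linear average"
  by (rule linearI)
    (simp_all add: average_def matrix_vector_right_distrib matrix_vector_mult_scaleR
      Bochner_Integration.integral_add[OF integrable_orbit integrable_orbit])

lemma average_GL_translate:
  assumes "S \<in> GL_of \<Omega>"
  shows "average (S *v x) = average x"
proof -
  have "average (S *v x) = (\<integral>T. (T ** S) *v x \<partial>\<mu>)"
    by (simp add: average_def matrix_vector_mul_assoc)
  also have "\<dots> = (\<integral>A. A *v x \<partial>distr \<mu> borel (\<lambda>A. A ** S))"
    by (rule integral_distr[symmetric])
      (simp_all add: measurable_haar_eq borel_measurable_linear linear_matrix_mult_left
        linear_matrix_vector_mult_left)
  also have "\<dots> = average x"
    using assms haar by (simp add: haar_GL_def average_def)
  finally show ?thesis .
qed

lemma GL_fixes_average: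
  assumes "S \<in> GL_of \<Omega>"
  shows "S *v average x = average x"
proof -
  have "S *v average x = (\<integral>T. (S ** T) *v x \<partial>\<mu>)"
    unfolding average_def
    by (simp add: integral_bounded_linear[symmetric] integrable_orbit matrix_vector_mul_assoc)
  also have "\<dots> = (\<integral>A. A *v x \<partial>distr \<mu> borel (\<lambda>A. S ** A))"
    by (rule integral_distr[symmetric])
      (simp_all add: measurable_haar_eq borel_measurable_linear linear_matrix_mult_right
        linear_matrix_vector_mult_left)
  also have "\<dots> = average x"
    using assms haar by (simp add: haar_GL_def average_def)
  finally show ?thesis .
qed

lemma average_GL_fixed_point:
  assumes "\<And>S. S \<in> GL_of \<Omega> \<Longrightarrow> S *v w = w"
  shows "average w = w"
proof -
  have "average w = (\<integral>T. w \<partial>\<mu>)"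
    unfolding average_def
    by (rule integral_cong_AE) (auto intro: AE_GL_I assms simp: borel_measurable_orbit)
  then show ?thesis
    by (simp add: prob_space)
qed

lemma average_mem: "x \<in> \<Omega> \<Longrightarrow> average x \<in> \<Omega>"
  unfolding average_def using state_space
  by (intro integral_mem_closed_convex)
    (auto simp: state_space_def compact_imp_closed integrable_orbit intro!: AE_GL_I GL_of_maps_into)

lemma inner_form_GL_inner: "inner_form (GL_inner \<mu>)"
proof (rule inner_form.intro)
  show "GL_inner \<mu> x y = GL_inner \<mu> y x" for x y
    by (simp add: GL_inner_def inner_commute)
  show "linear (GL_inner \<mu> x)" for x
    by (rule linearI)
      (simp_all add: GL_inner_def matrix_vector_right_distrib inner_add_right matrix_vector_mult_scaleR
        Bochner_Integration.integral_add[OF integrable_orbit_inner integrable_orbit_inner])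
  show "0 < GL_inner \<mu> x x" if "x \<noteq> 0" for x
  proof -
    have nonneg: "AE T in \<mu>. 0 \<le> (T *v x) \<bullet> (T *v x)"
      by simp
    have nonzero: "AE T in \<mu>. (T *v x) \<bullet> (T *v x) \<noteq> 0"
    proof (rule AE_GL_I)
      fix T assume "T \<in> GL_of \<Omega>"
      then have "inj ((*v) T)"
        by (simp add: GL_of_def inj_matrix_vector_mult)
      then show "(T *v x) \<bullet> (T *v x) \<noteq> 0"
        using \<open>x \<noteq> 0\<close> by (metis inner_eq_zero_iff matrix_vector_mult_0_right injD)
    qed
    have "GL_inner \<mu> x x \<noteq> 0"
    proof
      assume "GL_inner \<mu> x x = 0"
      then have "AE T in \<mu>. (T *v x) \<bullet> (T *v x) = 0"
        using integral_nonneg_eq_0_iff_AE[OF integrable_orbit_inner nonneg] by (simp add: GL_inner_def)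
      with nonzero have "AE T in \<mu>. False"
        by eventually_elim simp
      then show False
        by (simp add: AE_False)
    qed
    moreover have "GL_inner \<mu> x x \<ge> 0"
      unfolding GL_inner_def by (rule integral_nonneg_AE[OF nonneg])
    ultimately show ?thesis
      by simp
  qed
qed

lemma GL_inner_fixed_left:
  assumes "\<And>S. S \<in> GL_of \<Omega> \<Longrightarrow> S *v w = w"
  shows "GL_inner \<mu> w x = w \<bullet> average x"
proof -
  have "GL_inner \<mu> w x = (\<integral>T. w \<bullet> (T *v x) \<partial>\<mu>)"
    unfolding GL_inner_def
    by (rule integral_cong_AE)
      (auto intro: AE_GL_I borel_measurable_inner borel_measurable_orbit simp: assms)
  then show ?thesis
    by (simp add: average_def integrable_orbit)
qed

end

locale transitive_GL_haar = GL_haar +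
  assumes transitive:
    "x extreme_point_of \<Omega> \<Longrightarrow> y extreme_point_of \<Omega> \<Longrightarrow> \<exists>T\<in>GL_of \<Omega>. T *v x = y"
begin

lemma state_space_nonempty: "\<Omega> \<noteq> {}"
proof -
  have "axis undefined (1::real) \<in> span \<Omega>"
    using state_space by (simp add: state_space_def)
  then show ?thesis
    by auto
qed

lemma average_eq_on_state_space:
  assumes "x \<in> \<Omega>" "y \<in> \<Omega>"
  shows "average x = average y"
proof -
  have KM: "\<Omega> = convex hull {e. e extreme_point_of \<Omega>}"
    using state_space by (simp add: state_space_def Krein_Milman_Minkowski)
  then obtain e0 where e0: "e0 extreme_point_of \<Omega>"
    using state_space_nonempty by fastforce
  have "average e = average e0" if "e extreme_point_of \<Omega>" for e
    using transitive[OF e0 that] average_GL_translate by auto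
  then have "convex hull {e. e extreme_point_of \<Omega>} \<subseteq> {z. average z = average e0}"
    by (intro hull_minimal)
      (auto intro: affine_imp_convex affine_linear_level_set linear_average)
  then have "\<Omega> \<subseteq> {z. average z = average e0}"
    using KM by simp
  then show ?thesis
    using assms by (metis (mono_tags, lifting) mem_Collect_eq subsetD)
qed

lemma omegaM_eq_average:
  assumes "x \<in> \<Omega>"
  shows "omegaM \<Omega> = average x"
  unfolding omegaM_def
proof (rule the_equality)
  show "average x \<in> \<Omega> \<and> (\<forall>T\<in>GL_of \<Omega>. T *v average x = average x)"
    using average_mem[OF assms] GL_fixes_average by blast
next
  fix w assume w: "w \<in> \<Omega> \<and> (\<forall>T\<in>GL_of \<Omega>. T *v w = w)"
  then have "average w = w"
    by (intro average_GL_fixed_point) auto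
  moreover have "average w = average x"
    using w assms by (intro average_eq_on_state_space) auto
  ultimately show "w = average x"
    by simp
qed

lemma omegaM_mem: "omegaM \<Omega> \<in> \<Omega>"
proof -
  obtain x where "x \<in> \<Omega>"
    using state_space_nonempty by blast
  then show ?thesis
    by (simp add: omegaM_eq_average average_mem)
qed

lemma GL_fixes_omegaM:
  assumes "S \<in> GL_of \<Omega>"
  shows "S *v omegaM \<Omega> = omegaM \<Omega>"
proof -
  have "S *v average (omegaM \<Omega>) = average (omegaM \<Omega>)"
    using assms by (rule GL_fixes_average)
  then show ?thesis
    by (simp only: omegaM_eq_average[OF omegaM_mem, symmetric])
qed

lemma omegaM_nonzero: "omegaM \<Omega> \<noteq> 0"
proof -
  have "omegaM \<Omega> \<in> affine hull \<Omega>"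
    using omegaM_mem by (rule hull_inc)
  moreover have "0 \<notin> affine hull \<Omega>"
    using state_space by (simp add: state_space_def)
  ultimately show ?thesis
    by auto
qed

lemma average_combination:
  assumes "S \<subseteq> \<Omega>"
  shows "average (\<Sum>y\<in>S. u y *\<^sub>R y) = sum u S *\<^sub>R omegaM \<Omega>"
proof -
  have "average (\<Sum>y\<in>S. u y *\<^sub>R y) = (\<Sum>y\<in>S. u y *\<^sub>R average y)"
    by (simp add: linear_sum[OF linear_average] linear_scale[OF linear_average])
  also have "\<dots> = (\<Sum>y\<in>S. u y *\<^sub>R omegaM \<Omega>)"
    using assms omegaM_eq_average by (intro sum.cong) auto
  finally show ?thesis
    by (simp add: scaleR_sum_left)
qed

lemma state_combination:
  obtains S u where "finite S" "S \<subseteq> \<Omega>" "x = (\<Sum>y\<in>S. u y *\<^sub>R y)"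
proof -
  have "x \<in> span \<Omega>"
    using state_space by (simp add: state_space_def)
  then show thesis
    using that unfolding span_explicit by blast
qed

lemma affine_hull_iff_average: "x \<in> affine hull \<Omega> \<longleftrightarrow> average x = omegaM \<Omega>"
proof
  assume "x \<in> affine hull \<Omega>"
  moreover have "affine hull \<Omega> \<subseteq> {z. average z = omegaM \<Omega>}"
    using omegaM_eq_average
    by (intro hull_minimal) (auto intro: affine_linear_level_set linear_average)
  ultimately show "average x = omegaM \<Omega>"
    by blast
next
  assume x: "average x = omegaM \<Omega>"
  obtain S u where S: "finite S" "S \<subseteq> \<Omega>" "x = (\<Sum>y\<in>S. u y *\<^sub>R y)"
    using state_combination .
  then have "(sum u S - 1) *\<^sub>R omegaM \<Omega> = 0"
    using x average_combination[OF S(2)] by (simp add: algebra_simps)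
  then have "sum u S = 1"
    using omegaM_nonzero by simp
  then show "x \<in> affine hull \<Omega>"
    unfolding affine_hull_explicit using S by fastforce
qed

lemma GL_inner_omegaM_eq_1_iff:
  assumes "omegaM \<Omega> \<bullet> omegaM \<Omega> = 1"
  shows "GL_inner \<mu> (omegaM \<Omega>) x = 1 \<longleftrightarrow> x \<in> affine hull \<Omega>"
proof -
  obtain S u where S: "S \<subseteq> \<Omega>" "x = (\<Sum>y\<in>S. u y *\<^sub>R y)"
    using state_combination by metis
  then have avg: "average x = sum u S *\<^sub>R omegaM \<Omega>"
    using average_combination by blast
  then have "GL_inner \<mu> (omegaM \<Omega>) x = sum u S"
    using assms by (simp add: GL_inner_fixed_left GL_fixes_omegaM)
  moreover have "x \<in> affine hull \<Omega> \<longleftrightarrow> (sum u S - 1) *\<^sub>R omegaM \<Omega> = 0"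
    using avg by (simp add: affine_hull_iff_average algebra_simps)
  ultimately show ?thesis
    using omegaM_nonzero by simp
qed

end

theorem proposition2p12:
  fixes \<Omega> :: "(real^'n) set" and \<mu> :: "(real^'n^'n) measure"
  assumes "transitive_state_space \<Omega>"
    and "haar_GL \<Omega> \<mu>"
    and "omegaM \<Omega> \<bullet> omegaM \<Omega> = 1"
  shows "\<exists>v :: nat \<Rightarrow> real^'n.
           inj_on v {1..CARD('n)} \<and>
           independent (v ` {1..CARD('n)}) \<and> span (v ` {1..CARD('n)}) = UNIV \<and>
           (\<forall>i\<in>{1..CARD('n)}. \<forall>j\<in>{1..CARD('n)}.
              GL_inner \<mu> (v i) (v j) = (if i = j then 1 else 0)) \<and>
           v (CARD('n)) = omegaM \<Omega> \<and>
           (\<forall>x. x \<in> affine hull \<Omega> \<longleftrightarrow>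
              (\<exists>a :: nat \<Rightarrow> real. x = (\<Sum>l = 1..CARD('n) - 1. a l *\<^sub>R v l) + omegaM \<Omega>))"
proof -
  interpret transitive_GL_haar \<Omega> \<mu>
    using assms(1,2) by unfold_locales (auto simp: transitive_state_space_def)
  interpret finite_dim_inner_form "GL_inner \<mu>"
    unfolding finite_dim_inner_form_def by (rule inner_form_GL_inner)
  have "GL_inner \<mu> (omegaM \<Omega>) (omegaM \<Omega>) = 1"
    using GL_inner_omegaM_eq_1_iff[OF assms(3)] hull_inc[OF omegaM_mem] by simp
  then obtain v where on: "orthonormal_on {1..CARD('n)} v" and last: "v CARD('n) = omegaM \<Omega>"
    and span: "span (v ` {1..CARD('n)}) = UNIV"
    by (rule orthonormal_basis_ending_with) simp_all
  have "x \<in> affine hull \<Omega> \<longleftrightarrow>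
      (\<exists>a. x = (\<Sum>l = 1..CARD('n) - 1. a l *\<^sub>R v l) + omegaM \<Omega>)" for x
    using GL_inner_omegaM_eq_1_iff[OF assms(3), of x] orthonormal_on_last_eq_1_iff[OF on span, of x]
      last by simp
  moreover have "inj_on v {1..CARD('n)}" "independent (v ` {1..CARD('n)})"
    using orthonormal_on_inj_on[OF on] orthonormal_on_independent[OF _ on] by simp_all
  ultimately show ?thesis
    using on last span unfolding orthonormal_on_def by (intro exI[of _ v]) simp
qed

end
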